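(* Let $U$ be a non-empty set and $B\subseteq U^3$ a ternary relation satisfying (BT2): for all $a,b,c\in U$, $B(a,b,c)\Rightarrow B(a,a,b)$. Then $B$ satisfies (BT3): for all $a,b,c\in U$, $B(a,b,c)\wedge B(a,c,b)\Rightarrow b=c$, if and only if $B$ satisfies both (BTW): for all $a,b\in U$, $B(a,b,a)\Rightarrow a=b$, and (C): for all $a,b,c\in U$, if $a,b,c$ are pairwise distinct then $\langle a,b,c\rangle\notin B$ or $\langle a,c,b\rangle\notin B$. *)

theory Defs
  imports Main
begin

end

theory Submission
  imports Defs
begin

theorem proposition9:
  fixes U :: "'a set" and B :: "('a \<times> 'a \<times> 'a) set"
  assumes "U \<noteq> {}"
    and "B \<subseteq> U \<times> U \<times> U"
    and BT2: "\<forall>a\<in>U. \<forall>b\<in>U. \<forall>c\<in>U. (a, b, c) \<in> B \<longrightarrow> (a, a, b) \<in> B"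
  shows "(\<forall>a\<in>U. \<forall>b\<in>U. \<forall>c\<in>U. (a, b, c) \<in> B \<and> (a, c, b) \<in> B \<longrightarrow> b = c)
     \<longleftrightarrow>
     ((\<forall>a\<in>U. \<forall>b\<in>U. (a, b, a) \<in> B \<longrightarrow> a = b) \<and>
      (\<forall>a\<in>U. \<forall>b\<in>U. \<forall>c\<in>U. a \<noteq> b \<and> a \<noteq> c \<and> b \<noteq> c \<longrightarrow> (a, b, c) \<notin> B \<or> (a, c, b) \<notin> B))"
proof (intro iffI conjI ballI impI)
  assume BT3: "\<forall>a\<in>U. \<forall>b\<in>U. \<forall>c\<in>U. (a, b, c) \<in> B \<and> (a, c, b) \<in> B \<longrightarrow> b = c"
  {
    fix a b assume "a \<in> U" "b \<in> U" and aba: "(a, b, a) \<in> B"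
    then have "(a, a, b) \<in> B" using BT2 by blast
    with aba show "a = b" using BT3 \<open>a \<in> U\<close> \<open>b \<in> U\<close> by blast
  next
    fix a b c assume "a \<in> U" "b \<in> U" "c \<in> U" "a \<noteq> b \<and> a \<noteq> c \<and> b \<noteq> c"
    then show "(a, b, c) \<notin> B \<or> (a, c, b) \<notin> B" using BT3 by blast
  }
next
  assume "(\<forall>a\<in>U. \<forall>b\<in>U. (a, b, a) \<in> B \<longrightarrow> a = b) \<and>
      (\<forall>a\<in>U. \<forall>b\<in>U. \<forall>c\<in>U. a \<noteq> b \<and> a \<noteq> c \<and> b \<noteq> c \<longrightarrow> (a, b, c) \<notin> B \<or> (a, c, b) \<notin> B)"
  then have BTW: "\<forall>a\<in>U. \<forall>b\<in>U. (a, b, a) \<in> B \<longrightarrow> a = b"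
    and C: "\<forall>a\<in>U. \<forall>b\<in>U. \<forall>c\<in>U. a \<noteq> b \<and> a \<noteq> c \<and> b \<noteq> c \<longrightarrow> (a, b, c) \<notin> B \<or> (a, c, b) \<notin> B"
    by blast+
  fix a b c assume "a \<in> U" "b \<in> U" "c \<in> U" and abc: "(a, b, c) \<in> B \<and> (a, c, b) \<in> B"
  show "b = c"
  proof (rule ccontr)
    assume "b \<noteq> c"
    then consider "a = b" | "a = c" | "a \<noteq> b \<and> a \<noteq> c \<and> b \<noteq> c" by blast
    then show False
    proof cases
      case 1
      then show False using BTW abc \<open>a \<in> U\<close> \<open>c \<in> U\<close> \<open>b \<noteq> c\<close> by blast
    next
      case 2
      then show False using BTW abc \<open>a \<in> U\<close> \<open>b \<in> U\<close> \<open>b \<noteq> c\<close> by blast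
    next
      case 3
      then show False using C abc \<open>a \<in> U\<close> \<open>b \<in> U\<close> \<open>c \<in> U\<close> by blast
    qed
  qed
qed

end
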